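(* Let $\mathcal X=\mathcal X_1\times\cdots\times\mathcal X_b$, $\mathcal X_i=\mathbb R^{m_i\times n_i}$ with trace inner product and norms $\|\cdot\|_{(i)}$ (dual $\|\cdot\|_{(i)\star}$), $f$ continuously differentiable with $f\ge f^\star$, $\mathcal D$ a distribution on subsets of $[b]$, and assume constants $L^0_{i,S},L^1_{i,S}\ge0$ exist such that for all $S\in\operatorname{supp}(\mathcal D)$, $X\in\mathcal X$ and $\Gamma$ with $\Gamma_i=0$ for $i\notin S$: $f(X+\Gamma)-f(X)-\langle\nabla f(X),\Gamma\rangle\le\sum_{i\in S}\frac{L^0_{i,S}+L^1_{i,S}\|\nabla_if(X)\|_{(i)\star}}2\|\Gamma_i\|_{(i)}^2$. Let $S\in\operatorname{supp}(\mathcal D)$. Then for all $X\in\mathcal X$, $$\sum_{i\in S}\frac{\|\nabla_if(X)\|_{(i)\star}^2}{2\left(L^0_{i,S}+L^1_{i,S}\|\nabla_if(X)\|_{(i)\star}\right)}\le f(X)-f^\star.$$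
   Context: $\operatorname{supp}(\mathcal D)$ is the set of subsets of $[b]$ with positive probability under $\mathcal D$. *)

theory Defs
  imports "HOL-Analysis.Analysis" "HOL-Probability.Probability_Mass_Function"
begin

text \<open>Real m x n matrices are represented by their entry functions
  A :: nat \<Rightarrow> nat \<Rightarrow> real (row, column; 0-based), required to vanish
  outside the index range r < m, c < n.\<close>

definition mats :: "nat \<Rightarrow> nat \<Rightarrow> (nat \<Rightarrow> nat \<Rightarrow> real) set" where
  "mats m n = {A. \<forall>r c. (r < m \<and> c < n) \<or> A r c = 0}"

definition tr_inner :: "nat \<Rightarrow> nat \<Rightarrow> (nat \<Rightarrow> nat \<Rightarrow> real) \<Rightarrow> (nat \<Rightarrow> nat \<Rightarrow> real) \<Rightarrow> real" where
  "tr_inner m n A B = (\<Sum>r<m. \<Sum>c<n. A r c * B r c)"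

definition is_norm_on_mats :: "nat \<Rightarrow> nat \<Rightarrow> ((nat \<Rightarrow> nat \<Rightarrow> real) \<Rightarrow> real) \<Rightarrow> bool" where
  "is_norm_on_mats m n N \<longleftrightarrow>
     (\<forall>A\<in>mats m n. 0 \<le> N A) \<and>
     (\<forall>A\<in>mats m n. N A = 0 \<longleftrightarrow> A = (\<lambda>r c. 0)) \<and>
     (\<forall>A\<in>mats m n. \<forall>t::real. N (\<lambda>r c. t * A r c) = \<bar>t\<bar> * N A) \<and>
     (\<forall>A\<in>mats m n. \<forall>B\<in>mats m n. N (\<lambda>r c. A r c + B r c) \<le> N A + N B)"

definition dual_norm :: "nat \<Rightarrow> nat \<Rightarrow> ((nat \<Rightarrow> nat \<Rightarrow> real) \<Rightarrow> real) \<Rightarrow> (nat \<Rightarrow> nat \<Rightarrow> real) \<Rightarrow> real" where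
  "dual_norm m n N G = Sup {tr_inner m n G A | A. A \<in> mats m n \<and> N A \<le> 1}"

text \<open>The product space X_1 x ... x X_b (blocks indexed 0..<b, block i being
  m i x n i matrices) is represented as real^'k, where the finite index type 'k
  is put in bijection with the entry positions (i, r, c) via idx.
  blk idx m n X i is the i-th block of X, as an m i x n i matrix.\<close>
definition blk :: "('k::finite \<Rightarrow> nat \<times> nat \<times> nat) \<Rightarrow> (nat \<Rightarrow> nat) \<Rightarrow> (nat \<Rightarrow> nat)
     \<Rightarrow> real^'k \<Rightarrow> nat \<Rightarrow> (nat \<Rightarrow> nat \<Rightarrow> real)" where
  "blk idx m n X i = (\<lambda>r c. if r < m i \<and> c < n i then X $ (inv idx (i, r, c)) else 0)"

definition prod_inner :: "nat \<Rightarrow> ('k::finite \<Rightarrow> nat \<times> nat \<times> nat) \<Rightarrow> (nat \<Rightarrow> nat) \<Rightarrow> (nat \<Rightarrow> nat)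
     \<Rightarrow> real^'k \<Rightarrow> real^'k \<Rightarrow> real" where
  "prod_inner b idx m n X Y = (\<Sum>i<b. tr_inner (m i) (n i) (blk idx m n X i) (blk idx m n Y i))"

end

theory Submission
  imports Defs
begin

text \<open>Write \<open>d\<^sub>i\<close> for the dual norm of the \<open>i\<close>-th gradient block and
  \<open>L\<^sub>i = L0 i S + L1 i S * d\<^sub>i\<close>. Choose \<open>A\<^sub>i\<close> with \<open>N i A\<^sub>i \<le> 1\<close> nearly attaining the
  supremum defining \<open>d\<^sub>i\<close>, and step from \<open>X\<close> by \<open>-(d\<^sub>i / L\<^sub>i) A\<^sub>i\<close> on each block
  \<open>i \<in> S\<close>. The smoothness inequality and \<open>f \<ge> fstar\<close> then give
  \<open>fstar \<le> f X - (\<Sum>i\<in>S. d\<^sub>i\<^sup>2 / (2 L\<^sub>i)) + \<epsilon>\<close> for every \<open>\<epsilon> > 0\<close>.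
  Since the norms are arbitrary, the supremum defining \<open>d\<^sub>i\<close> is not a priori finite;
  boundedness follows from the same inequality applied to steps on a single block.\<close>

lemma le_sum_of_approx_infima:
  fixes \<phi> :: "'i \<Rightarrow> 'a \<Rightarrow> real"
  assumes "finite S"
    and approx: "\<And>i e. i \<in> S \<Longrightarrow> 0 < e \<Longrightarrow> \<exists>x\<in>M i. \<phi> i x \<le> v i + e"
    and lower: "\<And>x. (\<And>i. i \<in> S \<Longrightarrow> x i \<in> M i) \<Longrightarrow> a \<le> (\<Sum>i\<in>S. \<phi> i (x i))"
  shows "a \<le> (\<Sum>i\<in>S. v i)"
proof (rule field_le_epsilon)
  fix e :: real
  assume "0 < e"
  define e' where "e' = e / (card S + 1)"
  have "0 < e'" using \<open>0 < e\<close> by (simp add: e'_def)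
  then have "\<forall>i\<in>S. \<exists>y. y \<in> M i \<and> \<phi> i y \<le> v i + e'" using approx by blast
  then obtain x where x: "\<And>i. i \<in> S \<Longrightarrow> x i \<in> M i \<and> \<phi> i (x i) \<le> v i + e'"
    using bchoice by metis
  have "a \<le> (\<Sum>i\<in>S. \<phi> i (x i))" using x lower by blast
  also have "\<dots> \<le> (\<Sum>i\<in>S. v i + e')" using x by (intro sum_mono) auto
  also have "\<dots> = (\<Sum>i\<in>S. v i) + card S * e'" by (simp add: sum.distrib)
  also have "card S * e' \<le> e"
    using \<open>0 < e\<close> by (simp add: e'_def field_simps)
  finally show "a \<le> (\<Sum>i\<in>S. v i) + e" by simp
qed

lemma le_single_summand:
  fixes \<phi> :: "'i \<Rightarrow> 'a \<Rightarrow> real"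
  assumes "finite S" "i \<in> S" "y \<in> M i"
    and zero: "\<And>j. j \<in> S \<Longrightarrow> z j \<in> M j \<and> \<phi> j (z j) = 0"
    and lower: "\<And>x. (\<And>j. j \<in> S \<Longrightarrow> x j \<in> M j) \<Longrightarrow> a \<le> (\<Sum>j\<in>S. \<phi> j (x j))"
  shows "a \<le> \<phi> i y"
proof -
  have "a \<le> (\<Sum>j\<in>S. \<phi> j ((z(i := y)) j))"
    using assms by (intro lower) auto
  also have "\<dots> = (\<Sum>j\<in>S. if j = i then \<phi> i y else 0)"
    using zero by (intro sum.cong) auto
  also have "\<dots> = \<phi> i y" using assms(1,2) by simp
  finally show ?thesis .
qed

lemma zero_in_mats: "(\<lambda>r c. 0) \<in> mats m n"
  by (simp add: mats_def)

lemma scaled_in_mats: "A \<in> mats m n \<Longrightarrow> (\<lambda>r c. t * A r c) \<in> mats m n"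
  by (auto simp: mats_def)

lemma tr_inner_zero_right: "tr_inner m n G (\<lambda>r c. 0) = 0"
  by (simp add: tr_inner_def)

lemma tr_inner_scale_right: "tr_inner m n G (\<lambda>r c. t * A r c) = t * tr_inner m n G A"
  by (simp add: tr_inner_def sum_distrib_left algebra_simps)

lemma is_norm_on_mats_nonneg: "is_norm_on_mats m n N \<Longrightarrow> A \<in> mats m n \<Longrightarrow> 0 \<le> N A"
  by (simp add: is_norm_on_mats_def)

lemma is_norm_on_mats_zero: "is_norm_on_mats m n N \<Longrightarrow> N (\<lambda>r c. 0) = 0"
  using zero_in_mats by (simp add: is_norm_on_mats_def)

lemma is_norm_on_mats_scale:
  "is_norm_on_mats m n N \<Longrightarrow> A \<in> mats m n \<Longrightarrow> N (\<lambda>r c. t * A r c) = \<bar>t\<bar> * N A"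
  by (simp add: is_norm_on_mats_def)

definition dual_pairings :: "nat \<Rightarrow> nat \<Rightarrow> ((nat \<Rightarrow> nat \<Rightarrow> real) \<Rightarrow> real)
     \<Rightarrow> (nat \<Rightarrow> nat \<Rightarrow> real) \<Rightarrow> real set" where
  "dual_pairings m n N G = {tr_inner m n G A | A. A \<in> mats m n \<and> N A \<le> 1}"

lemma dual_norm_eq_Sup: "dual_norm m n N G = Sup (dual_pairings m n N G)"
  by (simp add: dual_norm_def dual_pairings_def)

lemma zero_in_dual_pairings: "is_norm_on_mats m n N \<Longrightarrow> 0 \<in> dual_pairings m n N G"
  unfolding dual_pairings_def
  using zero_in_mats is_norm_on_mats_zero tr_inner_zero_right by force

lemma bdd_above_dual_pairings:
  assumes N: "is_norm_on_mats m n N"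
    and quad: "\<And>A. A \<in> mats m n \<Longrightarrow> a \<le> tr_inner m n G A + c / 2 * (N A)\<^sup>2"
  shows "bdd_above (dual_pairings m n N G)"
proof (rule bdd_aboveI)
  fix x
  assume "x \<in> dual_pairings m n N G"
  then obtain A where A: "A \<in> mats m n" "N A \<le> 1" and x: "x = tr_inner m n G A"
    by (auto simp: dual_pairings_def)
  have "a \<le> tr_inner m n G (\<lambda>r c. (-1) * A r c) + c / 2 * (N (\<lambda>r c. (-1) * A r c))\<^sup>2"
    using A by (intro quad scaled_in_mats)
  also have "\<dots> = - x + c / 2 * (N A)\<^sup>2"
    using is_norm_on_mats_scale[OF N A(1), of "-1"] tr_inner_scale_right[of m n G "-1" A]
    by (simp add: x)
  also have "c / 2 * (N A)\<^sup>2 \<le> \<bar>c\<bar> / 2"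
  proof -
    have "(N A)\<^sup>2 \<le> 1"
      using is_norm_on_mats_nonneg[OF N A(1)] A(2) by (simp add: power_le_one)
    have "c / 2 * (N A)\<^sup>2 \<le> \<bar>c\<bar> / 2 * (N A)\<^sup>2" by (intro mult_right_mono) auto
    also have "\<dots> \<le> \<bar>c\<bar> / 2" using \<open>(N A)\<^sup>2 \<le> 1\<close> by (intro mult_left_le) auto
    finally show ?thesis .
  qed
  finally show "x \<le> \<bar>c\<bar> / 2 - a" by simp
qed

lemma dual_norm_nonneg:
  "is_norm_on_mats m n N \<Longrightarrow> bdd_above (dual_pairings m n N G) \<Longrightarrow> 0 \<le> dual_norm m n N G"
  unfolding dual_norm_eq_Sup by (rule cSup_upper[OF zero_in_dual_pairings])

lemma dual_norm_approx:
  assumes "is_norm_on_mats m n N" "bdd_above (dual_pairings m n N G)" "0 < e"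
  obtains A where "A \<in> mats m n" "N A \<le> 1" "dual_norm m n N G - e < tr_inner m n G A"
proof -
  have "dual_norm m n N G - e < Sup (dual_pairings m n N G)"
    using assms(3) by (simp add: dual_norm_eq_Sup)
  then obtain x where "x \<in> dual_pairings m n N G" "dual_norm m n N G - e < x"
    using less_cSup_iff zero_in_dual_pairings assms(1,2) by (metis empty_iff)
  then show ?thesis using that by (auto simp: dual_pairings_def)
qed

text \<open>For \<open>c = 0\<close> the bound is just \<open>e\<close> (as \<open>x / 0 = 0\<close>), witnessed by \<open>B = 0\<close>.\<close>

lemma dual_norm_descent_step:
  assumes N: "is_norm_on_mats m n N" and bdd: "bdd_above (dual_pairings m n N G)"
    and "0 \<le> c" "0 < e"
  shows "\<exists>B\<in>mats m n. tr_inner m n G B + c / 2 * (N B)\<^sup>2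
           \<le> - ((dual_norm m n N G)\<^sup>2 / (2 * c)) + e"
proof -
  define d where "d = dual_norm m n N G"
  define t where "t = d / c"
  have "0 \<le> t" using dual_norm_nonneg[OF N bdd] \<open>0 \<le> c\<close> by (simp add: t_def d_def)
  obtain A where A: "A \<in> mats m n" "N A \<le> 1" and near: "d - e / (t + 1) < tr_inner m n G A"
    using dual_norm_approx[OF N bdd, of "e / (t + 1)"] \<open>0 < e\<close> \<open>0 \<le> t\<close>
    unfolding d_def by force
  define B where "B = (\<lambda>r c. (- t) * A r c)"
  have "tr_inner m n G B = - t * tr_inner m n G A"
    unfolding B_def by (rule tr_inner_scale_right)
  also have "\<dots> \<le> - t * (d - e / (t + 1))"
    using near \<open>0 \<le> t\<close> by (simp add: mult_left_mono)
  finally have pairing: "tr_inner m n G B \<le> - t * d + e * (t / (t + 1))"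
    by (simp add: algebra_simps)
  have "N B = t * N A"
    unfolding B_def using is_norm_on_mats_scale[OF N A(1), of "- t"] \<open>0 \<le> t\<close> by simp
  moreover have "(N A)\<^sup>2 \<le> 1"
    using is_norm_on_mats_nonneg[OF N A(1)] A(2) by (simp add: power_le_one)
  ultimately have quad: "c / 2 * (N B)\<^sup>2 \<le> c / 2 * t\<^sup>2"
    using \<open>0 \<le> c\<close> by (simp add: power_mult_distrib mult_left_mono mult_left_le)
  have "e * (t / (t + 1)) \<le> e" using \<open>0 < e\<close> \<open>0 \<le> t\<close> by (intro mult_left_le) auto
  moreover have "- t * d + c / 2 * t\<^sup>2 = - (d\<^sup>2 / (2 * c))"
    by (cases "c = 0") (simp_all add: t_def field_simps power2_eq_square)
  ultimately have "tr_inner m n G B + c / 2 * (N B)\<^sup>2 \<le> - (d\<^sup>2 / (2 * c)) + e"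
    using pairing quad by linarith
  moreover have "B \<in> mats m n" unfolding B_def by (rule scaled_in_mats[OF A(1)])
  ultimately show ?thesis unfolding d_def by blast
qed

definition embed_blocks :: "('k::finite \<Rightarrow> nat \<times> nat \<times> nat) \<Rightarrow> nat set
     \<Rightarrow> (nat \<Rightarrow> nat \<Rightarrow> nat \<Rightarrow> real) \<Rightarrow> real^'k" where
  "embed_blocks idx S B = (\<chi> k. case idx k of (j, r, c) \<Rightarrow> if j \<in> S then B j r c else 0)"

lemma blk_embed_blocks:
  assumes idx: "bij_betw idx UNIV {(i, r, c). i < b \<and> r < m i \<and> c < n i}"
    and "j < b" and B: "\<And>i. i \<in> S \<Longrightarrow> B i \<in> mats (m i) (n i)"
  shows "blk idx m n (embed_blocks idx S B) j = (if j \<in> S then B j else (\<lambda>r c. 0))"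
proof (intro ext)
  fix r c
  show "blk idx m n (embed_blocks idx S B) j r c = (if j \<in> S then B j else (\<lambda>r c. 0)) r c"
  proof (cases "r < m j \<and> c < n j")
    case True
    then have "(j, r, c) \<in> range idx" using idx \<open>j < b\<close> by (auto simp: bij_betw_def)
    then have "idx (inv idx (j, r, c)) = (j, r, c)" by (simp add: f_inv_into_f)
    then show ?thesis using True by (simp add: blk_def embed_blocks_def)
  next
    case False
    then show ?thesis using B by (auto simp: blk_def mats_def)
  qed
qed

lemma prod_inner_embed_blocks:
  assumes idx: "bij_betw idx UNIV {(i, r, c). i < b \<and> r < m i \<and> c < n i}"
    and "S \<subseteq> {..<b}" and B: "\<And>i. i \<in> S \<Longrightarrow> B i \<in> mats (m i) (n i)"
  shows "prod_inner b idx m n Y (embed_blocks idx S B)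
           = (\<Sum>i\<in>S. tr_inner (m i) (n i) (blk idx m n Y i) (B i))"
proof -
  have "prod_inner b idx m n Y (embed_blocks idx S B)
          = (\<Sum>i<b. if i \<in> S then tr_inner (m i) (n i) (blk idx m n Y i) (B i) else 0)"
    unfolding prod_inner_def
    using blk_embed_blocks[OF idx _ B] by (intro sum.cong) (auto simp: tr_inner_zero_right)
  also have "\<dots> = (\<Sum>i\<in>S. tr_inner (m i) (n i) (blk idx m n Y i) (B i))"
    using \<open>S \<subseteq> {..<b}\<close> by (simp add: sum.If_cases Int_absorb1)
  finally show ?thesis .
qed

lemma lower_bound_by_block_steps:
  assumes idx: "bij_betw idx UNIV {(i, r, c). i < b \<and> r < m i \<and> c < n i}"
    and "S \<subseteq> {..<b}"
    and lower: "\<forall>Y. fstar \<le> f Y"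
    and smooth: "\<forall>\<Gamma>. (\<forall>i<b. i \<notin> S \<longrightarrow> blk idx m n \<Gamma> i = (\<lambda>r c. 0)) \<longrightarrow>
        f (X + \<Gamma>) - f X - prod_inner b idx m n G \<Gamma>
          \<le> (\<Sum>i\<in>S. L i / 2 * (N i (blk idx m n \<Gamma> i))\<^sup>2)"
    and B: "\<And>i. i \<in> S \<Longrightarrow> B i \<in> mats (m i) (n i)"
  shows "fstar - f X
           \<le> (\<Sum>i\<in>S. tr_inner (m i) (n i) (blk idx m n G i) (B i) + L i / 2 * (N i (B i))\<^sup>2)"
proof -
  define \<Gamma> where "\<Gamma> = embed_blocks idx S B"
  have blocks: "blk idx m n \<Gamma> i = (if i \<in> S then B i else (\<lambda>r c. 0))" if "i < b" for i
    unfolding \<Gamma>_def using blk_embed_blocks[OF idx that B] .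
  have "fstar \<le> f (X + \<Gamma>)" using lower by blast
  also have "\<dots> \<le> f X + prod_inner b idx m n G \<Gamma> + (\<Sum>i\<in>S. L i / 2 * (N i (blk idx m n \<Gamma> i))\<^sup>2)"
    using smooth[rule_format, of \<Gamma>] blocks by simp
  also have "(\<Sum>i\<in>S. L i / 2 * (N i (blk idx m n \<Gamma> i))\<^sup>2) = (\<Sum>i\<in>S. L i / 2 * (N i (B i))\<^sup>2)"
    using blocks \<open>S \<subseteq> {..<b}\<close> by (intro sum.cong) auto
  also have "prod_inner b idx m n G \<Gamma> = (\<Sum>i\<in>S. tr_inner (m i) (n i) (blk idx m n G i) (B i))"
    unfolding \<Gamma>_def using prod_inner_embed_blocks[OF idx \<open>S \<subseteq> {..<b}\<close> B] .
  finally show ?thesis by (simp add: sum.distrib)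
qed

theorem lemma11:
  fixes b :: nat and m n :: "nat \<Rightarrow> nat"
    and idx :: "'k::finite \<Rightarrow> nat \<times> nat \<times> nat"
    and N :: "nat \<Rightarrow> (nat \<Rightarrow> nat \<Rightarrow> real) \<Rightarrow> real"
    and f :: "real^'k \<Rightarrow> real" and gradf :: "real^'k \<Rightarrow> real^'k"
    and fstar :: real
    and D :: "nat set pmf"
    and L0 L1 :: "nat \<Rightarrow> nat set \<Rightarrow> real"
    and S :: "nat set" and X :: "real^'k"
  assumes idx: "bij_betw idx UNIV {(i, r, c). i < b \<and> r < m i \<and> c < n i}"
    and norms: "\<forall>i<b. is_norm_on_mats (m i) (n i) (N i)"
    and grad: "\<forall>Y. (f has_derivative (\<lambda>H. prod_inner b idx m n (gradf Y) H)) (at Y)"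
    and grad_cont: "continuous_on UNIV gradf"
    and lower: "\<forall>Y. fstar \<le> f Y"
    and D_subsets: "\<forall>T\<in>set_pmf D. T \<subseteq> {..<b}"
    and L_nonneg: "\<forall>T\<in>set_pmf D. \<forall>i\<in>T. 0 \<le> L0 i T \<and> 0 \<le> L1 i T"
    and smooth: "\<forall>T\<in>set_pmf D. \<forall>Y \<Gamma>.
        (\<forall>i<b. i \<notin> T \<longrightarrow> blk idx m n \<Gamma> i = (\<lambda>r c. 0)) \<longrightarrow>
        f (Y + \<Gamma>) - f Y - prod_inner b idx m n (gradf Y) \<Gamma>
          \<le> (\<Sum>i\<in>T. (L0 i T + L1 i T * dual_norm (m i) (n i) (N i) (blk idx m n (gradf Y) i)) / 2
                     * (N i (blk idx m n \<Gamma> i))^2)"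
    and S: "S \<in> set_pmf D"
  shows "(\<Sum>i\<in>S. (dual_norm (m i) (n i) (N i) (blk idx m n (gradf X) i))^2
            / (2 * (L0 i S + L1 i S * dual_norm (m i) (n i) (N i) (blk idx m n (gradf X) i))))
         \<le> f X - fstar"
proof -
  let ?G = "\<lambda>i. blk idx m n (gradf X) i"
  define d where "d i = dual_norm (m i) (n i) (N i) (?G i)" for i
  define L where "L i = L0 i S + L1 i S * d i" for i
  define \<phi> where "\<phi> i B = tr_inner (m i) (n i) (?G i) B + L i / 2 * (N i B)\<^sup>2" for i B
  have "S \<subseteq> {..<b}" using D_subsets S by blast
  then have "finite S" by (rule finite_subset) simp
  have N: "is_norm_on_mats (m i) (n i) (N i)" if "i \<in> S" for i
    using norms that \<open>S \<subseteq> {..<b}\<close> by blast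
  have smooth_X: "\<forall>\<Gamma>. (\<forall>i<b. i \<notin> S \<longrightarrow> blk idx m n \<Gamma> i = (\<lambda>r c. 0)) \<longrightarrow>
      f (X + \<Gamma>) - f X - prod_inner b idx m n (gradf X) \<Gamma>
        \<le> (\<Sum>i\<in>S. L i / 2 * (N i (blk idx m n \<Gamma> i))\<^sup>2)"
    using smooth S unfolding L_def d_def by blast
  have steps: "fstar - f X \<le> (\<Sum>i\<in>S. \<phi> i (B i))"
    if "\<And>i. i \<in> S \<Longrightarrow> B i \<in> mats (m i) (n i)" for B
    unfolding \<phi>_def
    using lower_bound_by_block_steps[OF idx \<open>S \<subseteq> {..<b}\<close> lower smooth_X that] .
  have bdd: "bdd_above (dual_pairings (m i) (n i) (N i) (?G i))" if "i \<in> S" for i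
  proof (rule bdd_above_dual_pairings[OF N[OF that]])
    fix A
    assume "A \<in> mats (m i) (n i)"
    have "fstar - f X \<le> \<phi> i A"
      by (rule le_single_summand[where z = "\<lambda>_ r c. 0" and M = "\<lambda>i. mats (m i) (n i)",
            OF \<open>finite S\<close> \<open>i \<in> S\<close> \<open>A \<in> mats (m i) (n i)\<close> _ steps])
        (simp add: \<phi>_def zero_in_mats tr_inner_zero_right is_norm_on_mats_zero[OF N])
    then show "fstar - f X \<le> tr_inner (m i) (n i) (?G i) A + L i / 2 * (N i A)\<^sup>2"
      by (simp add: \<phi>_def)
  qed
  have "0 \<le> L i" if "i \<in> S" for i
    using L_nonneg S that dual_norm_nonneg[OF N bdd, OF that that] by (simp add: L_def d_def)
  then have "\<exists>B\<in>mats (m i) (n i). \<phi> i B \<le> - ((d i)\<^sup>2 / (2 * L i)) + e"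
    if "i \<in> S" "0 < e" for i e
    unfolding \<phi>_def d_def using dual_norm_descent_step[OF N bdd] that by blast
  then have "fstar - f X \<le> (\<Sum>i\<in>S. - ((d i)\<^sup>2 / (2 * L i)))"
    by (rule le_sum_of_approx_infima[where M = "\<lambda>i. mats (m i) (n i)", OF \<open>finite S\<close> _ steps])
  then show ?thesis by (simp add: sum_negf d_def L_def)
qed

end
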